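(* For all integers $d\ge2$ and $N\ge1$, the quantity $\|\cdot\|_{\mathcal Q}$ is a norm on $\mathbb R^N$.
   Context: Let $|\Omega\rangle=\sum_{i=1}^d|i\rangle\otimes|i\rangle\in\mathbb C^d\otimes\mathbb C^d$ (unnormalized) and $\omega=|\Omega\rangle\langle\Omega|$. On $(\mathbb C^d)^{\otimes(N+1)}$, with tensor factors labelled $0,1,\dots,N$, $\omega_{(0,i)}\otimes I^{\otimes(N-1)}$ denotes the operator acting as $\omega$ on factors $0$ and $i$ and as the identity on the other factors. For $x\in\mathbb R^N$ let $S_x=\sum_{i=1}^N|x_i|\,\omega_{(0,i)}\otimes I^{\otimes(N-1)}$ and $\|x\|_{\mathcal Q}=\frac{d\,\lambda_{\max}(S_x)-\|x\|_1}{d^2-1}$, where $\lambda_{\max}$ denotes the largest eigenvalue and $\|x\|_1=\sum_i|x_i|$. *)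

theory Defs
  imports Complex_Main "Jordan_Normal_Form.Char_Poly"
begin

text \<open>Computational basis of (C^d)^{tensor (N+1)}: basis index k < d^(N+1) corresponds
  to the tuple of digits (digit d k 0, ..., digit d k N), digit j being the state of factor j.\<close>
definition digit :: "nat \<Rightarrow> nat \<Rightarrow> nat \<Rightarrow> nat" where
  "digit d k j = (k div d ^ j) mod d"

text \<open>Unnormalized maximally entangled vector Omega = sum_i |i>|i>, coefficient on |a>|b>.\<close>
definition Omega_coeff :: "nat \<Rightarrow> nat \<Rightarrow> complex" where
  "Omega_coeff a b = (if a = b then 1 else 0)"

text \<open>omega = |Omega><Omega|, matrix element <a b| omega |c e>.\<close>
definition omega_entry :: "nat \<Rightarrow> nat \<Rightarrow> nat \<Rightarrow> nat \<Rightarrow> complex" where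
  "omega_entry a b c e = Omega_coeff a b * cnj (Omega_coeff c e)"

text \<open>omega acting on factors 0 and i, identity on the other factors 1..N.\<close>
definition omega_0i :: "nat \<Rightarrow> nat \<Rightarrow> nat \<Rightarrow> complex mat" where
  "omega_0i d N i = mat (d ^ (N + 1)) (d ^ (N + 1)) (\<lambda>(r, c).
      omega_entry (digit d r 0) (digit d r i) (digit d c 0) (digit d c i) *
      (\<Prod>j\<in>{1..N} - {i}. if digit d r j = digit d c j then 1 else 0))"

text \<open>S_x = sum_{i=1}^N |x_i| omega_(0,i) tensor I; x is indexed by 1..N.\<close>
definition S_mat :: "nat \<Rightarrow> nat \<Rightarrow> (nat \<Rightarrow> real) \<Rightarrow> complex mat" where
  "S_mat d N x = mat (d ^ (N + 1)) (d ^ (N + 1))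
      (\<lambda>(r, c). \<Sum>i\<in>{1..N}. complex_of_real \<bar>x i\<bar> * omega_0i d N i $$ (r, c))"

text \<open>Largest eigenvalue (for Hermitian matrices all eigenvalues are real).\<close>
definition lambda_max :: "complex mat \<Rightarrow> real" where
  "lambda_max A = Max {e :: real. eigenvalue A (complex_of_real e)}"

definition norm1 :: "nat \<Rightarrow> (nat \<Rightarrow> real) \<Rightarrow> real" where
  "norm1 N x = (\<Sum>i\<in>{1..N}. \<bar>x i\<bar>)"

definition Q_norm :: "nat \<Rightarrow> nat \<Rightarrow> (nat \<Rightarrow> real) \<Rightarrow> real" where
  "Q_norm d N x = (real d * lambda_max (S_mat d N x) - norm1 N x) / (real d ^ 2 - 1)"

text \<open>f is a norm on R^N, vectors represented as functions on indices 1..N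
  (values outside 1..N are ignored).\<close>
definition is_norm_on :: "nat \<Rightarrow> ((nat \<Rightarrow> real) \<Rightarrow> real) \<Rightarrow> bool" where
  "is_norm_on N f \<longleftrightarrow>
     (\<forall>x y. (\<forall>i\<in>{1..N}. x i = y i) \<longrightarrow> f x = f y) \<and>
     (\<forall>x. 0 \<le> f x) \<and>
     (\<forall>x. f x = 0 \<longleftrightarrow> (\<forall>i\<in>{1..N}. x i = 0)) \<and>
     (\<forall>c x. f (\<lambda>i. c * x i) = \<bar>c\<bar> * f x) \<and>
     (\<forall>x y. f (\<lambda>i. x i + y i) \<le> f x + f y)"

end

theory Submission
  imports Defs "HOL-Analysis.Analysis" "Jordan_Normal_Form.Spectral_Radius"
begin

text \<open>Write vectors of \<open>(\<complex>\<^sup>d)\<^sup>\<otimes>\<^sup>(\<^sup>N\<^sup>+\<^sup>1\<^sup>)\<close> as functions \<open>V\<close> of digit tuples.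
  The quadratic form of \<open>S x\<close> at \<open>V\<close> is \<open>\<Sum>\<^sub>i \<bar>x i\<bar> \<omega>\<^sub>i V\<close>, where \<open>\<omega>\<^sub>i V\<close> is the squared norm
  of the contraction of \<open>V\<close> with \<open>\<Omega>\<close> on factors \<open>0\<close> and \<open>i\<close>, and by the Rayleigh principle
  \<open>\<lambda>(x) = lambda_max (S x)\<close> is the maximum of this form over unit vectors. Hence \<open>\<lambda>\<close> is
  absolutely homogeneous and subadditive in \<open>\<bar>x\<bar>\<close>, and convex in each \<open>\<bar>x i\<bar>\<close>.

  The heart of the proof is that \<open>d \<lambda>(x) - \<parallel>x\<parallel>\<^sub>1\<close> is monotone in each \<open>\<bar>x i\<bar>\<close>. Averaging the
  form of \<open>S (x(i := t))\<close> over the \<open>d\<^sup>2\<close> images of a top eigenvector of \<open>S (x(i := 0))\<close> under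
  \<open>|w\<rangle>\<langle>c|\<close> acting on factor \<open>i\<close> gives \<open>d \<lambda>(x(i := t)) \<ge> d \<lambda>(x(i := 0)) + t\<close>, and convexity
  in \<open>t\<close> upgrades this to slope at least \<open>1 / d\<close>. Monotonicity gives nonnegativity and, via
  \<open>\<bar>x + y\<bar> \<le> \<bar>x\<bar> + \<bar>y\<bar>\<close>, the triangle inequality; definiteness comes from \<open>\<lambda>(x) \<ge> d \<bar>x i\<bar>\<close>,
  witnessed by \<open>\<Omega>\<close> on factors \<open>0, i\<close> tensored with \<open>|0\<rangle>\<close> on the others.\<close>

section \<open>Rayleigh quotients of Hermitian matrices\<close>

text \<open>Vectors of \<open>\<complex>\<^sup>n\<close> are functions on \<open>nat\<close>, of which only the values below \<open>n\<close> matter.\<close>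

definition cinner :: "nat \<Rightarrow> (nat \<Rightarrow> complex) \<Rightarrow> (nat \<Rightarrow> complex) \<Rightarrow> complex" where
  "cinner n x y = (\<Sum>r<n. cnj (x r) * y r)"

definition sqnorm :: "nat \<Rightarrow> (nat \<Rightarrow> complex) \<Rightarrow> real" where
  "sqnorm n x = (\<Sum>r<n. (cmod (x r))\<^sup>2)"

definition mat_app :: "complex mat \<Rightarrow> nat \<Rightarrow> (nat \<Rightarrow> complex) \<Rightarrow> nat \<Rightarrow> complex" where
  "mat_app A n y r = (\<Sum>c<n. A $$ (r, c) * y c)"

definition qform :: "complex mat \<Rightarrow> nat \<Rightarrow> (nat \<Rightarrow> complex) \<Rightarrow> (nat \<Rightarrow> complex) \<Rightarrow> complex" where
  "qform A n x y = (\<Sum>r<n. \<Sum>c<n. cnj (x r) * A $$ (r, c) * y c)"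

definition rayleigh :: "complex mat \<Rightarrow> nat \<Rightarrow> (nat \<Rightarrow> complex) \<Rightarrow> real" where
  "rayleigh A n x = Re (qform A n x x)"

definition hermitian_on :: "complex mat \<Rightarrow> nat \<Rightarrow> bool" where
  "hermitian_on A n \<longleftrightarrow> (\<forall>r<n. \<forall>c<n. A $$ (r, c) = cnj (A $$ (c, r)))"

lemma of_real_sqnorm: "complex_of_real (sqnorm n x) = cinner n x x"
  unfolding sqnorm_def cinner_def of_real_sum
  by (intro sum.cong refl) (simp only: complex_norm_square mult.commute)

lemma sqnorm_eq_Re_cinner: "sqnorm n x = Re (cinner n x x)"
  by (metis of_real_sqnorm Re_complex_of_real)

lemma sqnorm_nonneg: "sqnorm n x \<ge> 0"
  unfolding sqnorm_def by (intro sum_nonneg) auto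

lemma sqnorm_eq_0_imp:
  assumes "sqnorm n x = 0" "r < n"
  shows "x r = 0"
proof -
  have "(cmod (x r))\<^sup>2 = 0"
    using assms sum_nonneg_eq_0_iff[of "{..<n}" "\<lambda>r. (cmod (x r))\<^sup>2"] unfolding sqnorm_def by auto
  then show ?thesis by simp
qed

lemma sqnorm_scale: "sqnorm n (\<lambda>r. c * x r) = (cmod c)\<^sup>2 * sqnorm n x"
  unfolding sqnorm_def sum_distrib_left by (intro sum.cong refl) (simp add: norm_mult power_mult_distrib)

lemma sqnorm_le_coord: "r < n \<Longrightarrow> (cmod (x r))\<^sup>2 \<le> sqnorm n x"
  unfolding sqnorm_def by (rule member_le_sum) auto

lemma cinner_commute: "cinner n x y = cnj (cinner n y x)"
  unfolding cinner_def cnj_sum by (simp add: mult.commute)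

lemma qform_eq_cinner_mat_app: "qform A n x y = cinner n x (mat_app A n y)"
  unfolding qform_def cinner_def mat_app_def sum_distrib_left by (simp add: mult.assoc)

lemma qform_scale: "qform A n (\<lambda>r. c * x r) (\<lambda>r. c * x r) = cnj c * c * qform A n x x"
  unfolding qform_def sum_distrib_left by (intro sum.cong refl) (simp add: algebra_simps)

lemma qform_commute:
  assumes "hermitian_on A n"
  shows "qform A n x y = cnj (qform A n y x)"
proof -
  have "cnj (qform A n y x) = (\<Sum>r<n. \<Sum>c<n. y r * cnj (A $$ (r, c)) * cnj (x c))"
    unfolding qform_def cnj_sum by simp
  also have "\<dots> = (\<Sum>r<n. \<Sum>c<n. cnj (x c) * A $$ (c, r) * y r)"
  proof (intro sum.cong refl)
    fix r c assume "r \<in> {..<n}" "c \<in> {..<n}"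
    then have "A $$ (c, r) = cnj (A $$ (r, c))"
      using assms unfolding hermitian_on_def by blast
    then show "y r * cnj (A $$ (r, c)) * cnj (x c) = cnj (x c) * A $$ (c, r) * y r" by simp
  qed
  also have "\<dots> = qform A n x y" unfolding qform_def by (rule sum.swap)
  finally show ?thesis by simp
qed

lemma qform_line:
  "qform A n (\<lambda>r. x r + complex_of_real t * y r) (\<lambda>r. x r + complex_of_real t * y r)
   = qform A n x x + of_real t * (qform A n x y + qform A n y x) + (of_real t)\<^sup>2 * qform A n y y"
  unfolding qform_def
  by (simp add: sum.distrib sum_distrib_left algebra_simps power2_eq_square)

lemma cinner_line:
  "cinner n (\<lambda>r. x r + complex_of_real t * y r) (\<lambda>r. x r + complex_of_real t * y r)
   = cinner n x x + of_real t * (cinner n x y + cinner n y x) + (of_real t)\<^sup>2 * cinner n y y"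
  unfolding cinner_def
  by (simp add: sum.distrib sum_distrib_left algebra_simps power2_eq_square)

lemma continuous_on_coordinate [continuous_intros]:
  "continuous_on S (\<lambda>x::nat \<Rightarrow> complex. x i)"
  by (rule continuous_on_subset[OF continuous_on_product_coordinates]) auto

lemma compact_prefix_unit_sphere:
  "compact {x::nat \<Rightarrow> complex. (\<forall>r\<ge>n. x r = 0) \<and> sqnorm n x = 1}" (is "compact ?K")
proof -
  let ?B = "PiE UNIV (\<lambda>_::nat. cball (0::complex) 1)"
  have "compact ?B"
    using compactin_PiE[of "\<lambda>_::nat. euclidean" UNIV "\<lambda>_. cball (0::complex) 1"]
    by (simp add: euclidean_product_topology)
  moreover have "closed {x::nat \<Rightarrow> complex. \<forall>r\<ge>n. x r = 0}"
  proof -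
    have "{x::nat \<Rightarrow> complex. \<forall>r\<ge>n. x r = 0} = (\<Inter>r\<in>{n..}. {x. x r = 0})" by auto
    moreover have "closed {x::nat \<Rightarrow> complex. x r = 0}" for r
      by (intro closed_Collect_eq continuous_intros)
    ultimately show ?thesis by (simp add: closed_INT)
  qed
  moreover have "closed {x::nat \<Rightarrow> complex. sqnorm n x = 1}"
    unfolding sqnorm_def by (intro closed_Collect_eq continuous_intros)
  moreover have "?K \<subseteq> ?B"
  proof
    fix x assume x: "x \<in> ?K"
    have "x r \<in> cball 0 1" for r
    proof (cases "r < n")
      case True
      then have "(cmod (x r))\<^sup>2 \<le> 1" using sqnorm_le_coord[of r n x] x by simp
      then show ?thesis by (simp add: power_le_one_iff)
    next
      case False
      then show ?thesis using x by simp
    qed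
    then show "x \<in> ?B" by auto
  qed
  then have "?K = ?B \<inter> ({x. \<forall>r\<ge>n. x r = 0} \<inter> {x. sqnorm n x = 1})" by blast
  ultimately show ?thesis by (simp only:) (intro compact_Int_closed closed_Int)
qed

lemma rayleigh_scale: "rayleigh A n (\<lambda>r. complex_of_real s * x r) = s\<^sup>2 * rayleigh A n x"
  unfolding rayleigh_def qform_scale by (simp add: power2_eq_square)

lemma rayleigh_attains_max:
  assumes "n > 0"
  obtains u where "sqnorm n u = 1" "\<And>x. rayleigh A n x \<le> rayleigh A n u * sqnorm n x"
proof -
  define K where "K = {x::nat \<Rightarrow> complex. (\<forall>r\<ge>n. x r = 0) \<and> sqnorm n x = 1}"
  have "sqnorm n (\<lambda>r. if r = 0 then 1 else 0) = (\<Sum>r<n. if r = 0 then 1 else 0)"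
    unfolding sqnorm_def by (intro sum.cong) auto
  then have "(\<lambda>r. if r = 0 then 1 else 0) \<in> K"
    using assms by (simp add: K_def)
  moreover have "continuous_on K (rayleigh A n)"
    unfolding rayleigh_def qform_def by (intro continuous_intros)
  ultimately obtain u where u: "u \<in> K"
    and u_max: "\<And>y. y \<in> K \<Longrightarrow> rayleigh A n y \<le> rayleigh A n u"
    using continuous_attains_sup[OF compact_prefix_unit_sphere[of n, folded K_def]] by blast
  have "rayleigh A n x \<le> rayleigh A n u * sqnorm n x" for x
  proof (cases "sqnorm n x = 0")
    case True
    then show ?thesis by (simp add: rayleigh_def qform_def sqnorm_eq_0_imp)
  next
    case False
    then have pos: "sqnorm n x > 0" using sqnorm_nonneg[of n x] by simp
    define s where "s = sqrt (sqnorm n x)"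
    have s: "s > 0" "s\<^sup>2 = sqnorm n x" using pos unfolding s_def by auto
    define y where "y = (\<lambda>r. if r < n then complex_of_real (1 / s) * x r else 0)"
    have "sqnorm n y = sqnorm n (\<lambda>r. complex_of_real (1 / s) * x r)"
      unfolding y_def sqnorm_def by (intro sum.cong) auto
    also have "\<dots> = 1"
      unfolding sqnorm_scale using s pos by (simp add: norm_divide power_divide)
    finally have "y \<in> K" by (simp add: K_def y_def)
    have "rayleigh A n y = rayleigh A n (\<lambda>r. complex_of_real (1 / s) * x r)"
      unfolding y_def rayleigh_def qform_def by (intro arg_cong[where f = Re] sum.cong) auto
    also have "\<dots> = rayleigh A n x / s\<^sup>2"
      unfolding rayleigh_scale by (simp add: power_divide)
    finally have "rayleigh A n x / s\<^sup>2 \<le> rayleigh A n u"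
      using u_max[OF \<open>y \<in> K\<close>] by simp
    then show ?thesis using s pos by (simp add: pos_divide_le_eq)
  qed
  moreover have "sqnorm n u = 1" using u by (simp add: K_def)
  ultimately show thesis by (intro that)
qed

lemma nonpos_if_le_all_pos_multiples:
  fixes a C :: real
  assumes "\<And>t. t > 0 \<Longrightarrow> a \<le> t * C"
  shows "a \<le> 0"
proof (rule ccontr)
  assume "\<not> a \<le> 0"
  define t where "t = a / (\<bar>C\<bar> + 1)"
  have "t > 0" using \<open>\<not> a \<le> 0\<close> by (simp add: t_def)
  have "t * C \<le> t * \<bar>C\<bar>" using \<open>t > 0\<close> by (simp add: mult_left_mono)
  also have "\<dots> < t * (\<bar>C\<bar> + 1)" using \<open>t > 0\<close> by simp
  also have "\<dots> = a" by (simp add: t_def)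
  finally show False using assms[OF \<open>t > 0\<close>] by simp
qed

text \<open>First variation: along \<open>u + t w\<close> with \<open>w = A u - M u\<close> the Rayleigh bound
  forces \<open>2 t \<parallel>w\<parallel>\<^sup>2 \<le> t\<^sup>2 (M \<parallel>w\<parallel>\<^sup>2 - \<langle>w, A w\<rangle>)\<close> for all \<open>t > 0\<close>.\<close>
lemma rayleigh_maximizer_eigenvector:
  assumes herm: "hermitian_on A n" and u1: "sqnorm n u = 1"
    and u_max: "\<And>x. rayleigh A n x \<le> rayleigh A n u * sqnorm n x"
    and r: "r < n"
  shows "mat_app A n u r = of_real (rayleigh A n u) * u r"
proof -
  define M where "M = rayleigh A n u"
  define w where "w = (\<lambda>r. mat_app A n u r - of_real M * u r)"
  have "cinner n u u = 1" using of_real_sqnorm[of n u] u1 by simp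
  moreover have "cinner n w u = cnj (qform A n u u) - of_real M * cinner n u u"
    unfolding w_def cinner_def qform_eq_cinner_mat_app cinner_commute[of n u "mat_app A n u"]
    by (simp add: algebra_simps sum_subtractf sum_distrib_left cinner_def cnj_sum)
  ultimately have wu: "Re (cinner n w u) = 0" "Re (cinner n u w) = 0"
    using cinner_commute[of n u w] by (simp_all add: M_def rayleigh_def)
  have "cinner n w w = qform A n w u - of_real M * cinner n w u"
    unfolding qform_eq_cinner_mat_app w_def cinner_def
    by (simp add: algebra_simps sum_subtractf sum_distrib_left)
  then have ww: "sqnorm n w = Re (qform A n w u)" "Re (qform A n u w) = sqnorm n w"
    using wu qform_commute[OF herm, of u w] by (simp_all add: sqnorm_eq_Re_cinner)
  have "2 * sqnorm n w \<le> t * (M * sqnorm n w - rayleigh A n w)" if t: "t > 0" for t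
  proof -
    let ?z = "\<lambda>r. u r + complex_of_real t * w r"
    have "rayleigh A n ?z = M + t * (2 * sqnorm n w) + t\<^sup>2 * rayleigh A n w"
      unfolding rayleigh_def qform_line using ww by (simp add: M_def rayleigh_def power2_eq_square)
    moreover have "sqnorm n ?z = 1 + t\<^sup>2 * sqnorm n w"
      unfolding sqnorm_eq_Re_cinner cinner_line using u1 wu
      by (simp add: sqnorm_eq_Re_cinner power2_eq_square)
    ultimately have "M + t * (2 * sqnorm n w) + t\<^sup>2 * rayleigh A n w \<le> M * (1 + t\<^sup>2 * sqnorm n w)"
      using u_max[of ?z] by (simp add: M_def)
    then have "t * (2 * sqnorm n w) \<le> t * (t * (M * sqnorm n w - rayleigh A n w))"
      by (simp add: algebra_simps power2_eq_square)
    then show ?thesis using t by simp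
  qed
  then have "2 * sqnorm n w \<le> 0" by (rule nonpos_if_le_all_pos_multiples)
  then have "sqnorm n w = 0" using sqnorm_nonneg[of n w] by simp
  then show ?thesis using sqnorm_eq_0_imp[of n w r] r by (simp add: w_def M_def)
qed

lemma index_mult_mat_vec_mat_app:
  assumes "A \<in> carrier_mat n n" "r < n"
  shows "(A *\<^sub>v Matrix.vec n u) $ r = mat_app A n u r"
  using assms unfolding mat_app_def by (simp add: scalar_prod_def atLeast0LessThan)

lemma eigenvalueI_mat_app:
  assumes A: "A \<in> carrier_mat n n" and r: "r < n" "u r \<noteq> 0"
    and eig: "\<And>r. r < n \<Longrightarrow> mat_app A n u r = c * u r"
  shows "eigenvalue A c"
  unfolding eigenvalue_def eigenvector_def
proof (intro exI conjI)
  show "Matrix.vec n u \<in> carrier_vec (dim_row A)" using A by simp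
  show "Matrix.vec n u \<noteq> 0\<^sub>v (dim_row A)"
    using A r by (metis index_vec index_zero_vec(1) carrier_matD(1))
  show "A *\<^sub>v Matrix.vec n u = c \<cdot>\<^sub>v Matrix.vec n u"
  proof (rule eq_vecI)
    fix i assume "i < dim_vec (c \<cdot>\<^sub>v Matrix.vec n u)"
    then have "i < n" by simp
    then show "(A *\<^sub>v Matrix.vec n u) $ i = (c \<cdot>\<^sub>v Matrix.vec n u) $ i"
      by (simp only: index_mult_mat_vec_mat_app[OF A] eig) simp
  qed (use A in simp)
qed

lemma real_eigenvalue_le:
  assumes A: "A \<in> carrier_mat n n" and ev: "eigenvalue A (complex_of_real e)"
    and bound: "\<And>x. rayleigh A n x \<le> M * sqnorm n x"
  shows "e \<le> M"
proof -
  obtain v where v: "v \<in> carrier_vec n" "v \<noteq> 0\<^sub>v n" "A *\<^sub>v v = of_real e \<cdot>\<^sub>v v"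
    using ev A unfolding eigenvalue_def eigenvector_def by auto
  define x where "x = (\<lambda>r. v $ r)"
  have "Matrix.vec n x = v" using v by (auto simp: x_def)
  then have "mat_app A n x r = of_real e * x r" if "r < n" for r
    using index_mult_mat_vec_mat_app[OF A that, of x] v that by (simp add: x_def)
  then have "qform A n x x = of_real e * cinner n x x"
    unfolding qform_eq_cinner_mat_app cinner_def sum_distrib_left
    by (intro sum.cong refl) simp
  then have "e * sqnorm n x \<le> M * sqnorm n x"
    using bound[of x] by (simp add: rayleigh_def sqnorm_eq_Re_cinner)
  moreover obtain r where "r < n" "x r \<noteq> 0"
    using v \<open>Matrix.vec n x = v\<close> by (metis eq_vecI carrier_vecD index_vec index_zero_vec)
  then have "sqnorm n x > 0"
    using sqnorm_nonneg[of n x] sqnorm_eq_0_imp[of n x r] by fastforce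
  ultimately show ?thesis by simp
qed

lemma finite_real_eigenvalues:
  assumes "A \<in> carrier_mat n n"
  shows "finite {e::real. eigenvalue A (complex_of_real e)}"
proof -
  have "complex_of_real ` {e. eigenvalue A (complex_of_real e)} \<subseteq> spectrum A"
    unfolding spectrum_def by auto
  then have "finite (complex_of_real ` {e. eigenvalue A (complex_of_real e)})"
    using card_finite_spectrum(1)[OF assms] finite_subset by blast
  then show ?thesis by (rule finite_imageD) (simp add: inj_on_def)
qed

lemma hermitian_lambda_max:
  assumes A: "A \<in> carrier_mat n n" and n: "n > 0" and herm: "hermitian_on A n"
  obtains u where "sqnorm n u = 1" "rayleigh A n u = lambda_max A"
    "\<And>x. rayleigh A n x \<le> lambda_max A * sqnorm n x"
proof -
  obtain u where u1: "sqnorm n u = 1" and u_max: "\<And>x. rayleigh A n x \<le> rayleigh A n u * sqnorm n x"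
    using rayleigh_attains_max[OF n] by blast
  have "\<exists>r<n. u r \<noteq> 0"
  proof (rule ccontr)
    assume "\<not> (\<exists>r<n. u r \<noteq> 0)"
    then have "sqnorm n u = 0" by (simp add: sqnorm_def)
    with u1 show False by simp
  qed
  then obtain r where r: "r < n" "u r \<noteq> 0" by blast
  have ev: "eigenvalue A (of_real (rayleigh A n u))"
    using eigenvalueI_mat_app[where u = u, OF A r] rayleigh_maximizer_eigenvector[OF herm u1 u_max] by blast
  have "lambda_max A = rayleigh A n u"
    unfolding lambda_max_def
    by (rule Max_eqI[OF finite_real_eigenvalues[OF A]]) (use ev real_eigenvalue_le[OF A _ u_max] in auto)
  with u1 u_max show thesis by (intro that) auto
qed

section \<open>Digit tuples\<close>

definition tuples :: "nat \<Rightarrow> nat set \<Rightarrow> (nat \<Rightarrow> nat) set" where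
  "tuples d S = PiE S (\<lambda>_. {..<d})"

lemma sum_tuples_insert:
  assumes "j \<notin> S"
  shows "(\<Sum>f\<in>tuples d (insert j S). F f) = (\<Sum>c<d. \<Sum>h\<in>tuples d S. F (h(j := c)))"
proof -
  have "(\<Sum>f\<in>tuples d (insert j S). F f)
      = (\<Sum>f\<in>(\<lambda>(y, g). g(j := y)) ` ({..<d} \<times> tuples d S). F f)"
    unfolding tuples_def PiE_insert_eq by simp
  also have "\<dots> = (\<Sum>p\<in>{..<d} \<times> tuples d S. F ((\<lambda>(y, g). g(j := y)) p))"
    by (rule sum.reindex[unfolded comp_def])
      (use inj_combinator[OF assms, of "\<lambda>_. {..<d}"] in \<open>simp add: tuples_def\<close>)
  also have "\<dots> = (\<Sum>c<d. \<Sum>h\<in>tuples d S. F (h(j := c)))"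
    by (simp add: sum.cartesian_product case_prod_unfold)
  finally show ?thesis .
qed

lemma finite_tuples: "finite S \<Longrightarrow> finite (tuples d S)"
  unfolding tuples_def by (simp add: finite_PiE)

lemma card_tuples: "finite S \<Longrightarrow> card (tuples d S) = d ^ card S"
  unfolding tuples_def by (simp add: card_PiE)

definition digit_tuple :: "nat \<Rightarrow> nat \<Rightarrow> nat \<Rightarrow> (nat \<Rightarrow> nat)" where
  "digit_tuple d N k = restrict (\<lambda>j. digit d k j) {0..N}"

lemma digit_expansion: "k = (\<Sum>j<m. digit d k j * d ^ j) + (k div d ^ m) * d ^ m"
proof (induction m)
  case 0 then show ?case by simp
next
  case (Suc m)
  have "k div d ^ m = (k div d ^ m div d) * d + digit d k m"
    unfolding digit_def by simp
  moreover have "k div d ^ m div d = k div d ^ Suc m"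
    by (metis div_mult2_eq power_Suc2)
  ultimately have "(k div d ^ m) * d ^ m = digit d k m * d ^ m + (k div d ^ Suc m) * d ^ Suc m"
    by (metis add.commute add_mult_distrib mult.assoc mult.commute power_Suc)
  then show ?case using Suc.IH by simp
qed

lemma sum_digits_eq:
  assumes "k < d ^ (N + 1)"
  shows "k = (\<Sum>j\<in>{0..N}. digit d k j * d ^ j)"
proof -
  have "k div d ^ (N + 1) = 0" using assms by simp
  then have "k = (\<Sum>j<N + 1. digit d k j * d ^ j)" using digit_expansion[where k=k and m="N + 1" and d=d] by simp
  moreover have "{..<N + 1} = {0..N}" by auto
  ultimately show ?thesis by metis
qed

lemma bij_betw_digit_tuple:
  assumes "d > 0"
  shows "bij_betw (digit_tuple d N) {..<d ^ (N + 1)} (tuples d {0..N})"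
proof -
  have inj: "inj_on (digit_tuple d N) {..<d ^ (N + 1)}"
  proof (rule inj_onI)
    fix k k' assume k: "k \<in> {..<d ^ (N + 1)}" and k': "k' \<in> {..<d ^ (N + 1)}"
      and e: "digit_tuple d N k = digit_tuple d N k'"
    have "\<forall>j\<in>{0..N}. digit d k j = digit d k' j"
      using e unfolding digit_tuple_def by (metis restrict_apply')
    then show "k = k'" using sum_digits_eq[of k d N] sum_digits_eq[of k' d N] k k' by simp
  qed
  have sub: "digit_tuple d N ` {..<d ^ (N + 1)} \<subseteq> tuples d {0..N}"
    unfolding digit_tuple_def tuples_def digit_def using assms by auto
  have "card (digit_tuple d N ` {..<d ^ (N + 1)}) = card (tuples d {0..N})"
    using card_image[OF inj] card_tuples[of "{0..N}" d] by simp
  then have "digit_tuple d N ` {..<d ^ (N + 1)} = tuples d {0..N}"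
    using card_subset_eq[OF finite_tuples sub] by simp
  then show ?thesis using inj unfolding bij_betw_def by simp
qed

lemma sum_digit_tuple_reindex:
  assumes "d > 0"
  shows "(\<Sum>r<d ^ (N + 1). G (digit_tuple d N r)) = (\<Sum>f\<in>tuples d {0..N}. G f)"
  using sum.reindex_bij_betw[OF bij_betw_digit_tuple[OF assms], of G] by simp

lemma digit_tuple_apply: "j \<le> N \<Longrightarrow> digit_tuple d N r j = digit d r j"
  unfolding digit_tuple_def by simp

section \<open>The quadratic form of \<open>S_mat\<close> in tuple coordinates\<close>

definition omega_kernel :: "nat \<Rightarrow> nat \<Rightarrow> (nat \<Rightarrow> nat) \<Rightarrow> (nat \<Rightarrow> nat) \<Rightarrow> complex" where
  "omega_kernel N i f g = (if f 0 = f i \<and> g 0 = g i \<and> (\<forall>j\<in>{1..N} - {i}. f j = g j) then 1 else 0)"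

lemma prod_indicator:
  "finite A \<Longrightarrow>
    (\<Prod>j\<in>A. if P j then (1::'a::comm_semiring_1) else 0) = (if \<forall>j\<in>A. P j then 1 else 0)"
  by (induction A rule: finite_induct) auto

lemma omega_0i_digit_tuple:
  assumes i: "i \<in> {1..N}" and r: "r < d ^ (N + 1)" and c: "c < d ^ (N + 1)"
  shows "omega_0i d N i $$ (r, c) = omega_kernel N i (digit_tuple d N r) (digit_tuple d N c)"
proof -
  have "omega_0i d N i $$ (r, c)
      = (if digit d r 0 = digit d r i then 1 else 0) * (if digit d c 0 = digit d c i then 1 else 0) *
        (\<Prod>j\<in>{1..N} - {i}. if digit d r j = digit d c j then 1 else 0)"
    unfolding omega_0i_def using r c by (simp add: omega_entry_def Omega_coeff_def)
  also have "\<dots> = omega_kernel N i (digit_tuple d N r) (digit_tuple d N c)"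
    unfolding prod_indicator[OF finite_Diff[OF finite_atLeastAtMost]] omega_kernel_def
    using i by (simp add: digit_tuple_apply)
  finally show ?thesis .
qed

definition omega_contract :: "nat \<Rightarrow> nat \<Rightarrow> ((nat \<Rightarrow> nat) \<Rightarrow> complex) \<Rightarrow> (nat \<Rightarrow> nat) \<Rightarrow> complex" where
  "omega_contract d i V h = (\<Sum>a<d. V (h(i := a, 0 := a)))"

definition omega_form :: "nat \<Rightarrow> nat \<Rightarrow> nat \<Rightarrow> ((nat \<Rightarrow> nat) \<Rightarrow> complex) \<Rightarrow> real" where
  "omega_form d N i V = (\<Sum>h\<in>tuples d ({1..N} - {i}). (cmod (omega_contract d i V h))\<^sup>2)"

definition tuple_sqnorm :: "nat \<Rightarrow> nat \<Rightarrow> ((nat \<Rightarrow> nat) \<Rightarrow> complex) \<Rightarrow> real" where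
  "tuple_sqnorm d N V = (\<Sum>f\<in>tuples d {0..N}. (cmod (V f))\<^sup>2)"

lemma sum_tuples_split_0_i:
  assumes "i \<in> {1..N}"
  shows "(\<Sum>f\<in>tuples d {0..N}. F f)
    = (\<Sum>a<d. \<Sum>b<d. \<Sum>h\<in>tuples d ({1..N} - {i}). F (h(i := b, 0 := a)))"
proof -
  have split: "{0..N} = insert 0 (insert i ({1..N} - {i}))" using assms by auto
  have notin: "0 \<notin> insert i ({1..N} - {i})" "i \<notin> {1..N} - {i}" using assms by auto
  show ?thesis unfolding split sum_tuples_insert[OF notin(1)] sum_tuples_insert[OF notin(2)] ..
qed

lemma omega_kernel_upd:
  assumes i: "i \<in> {1..N}"
  shows "omega_kernel N i f (h(i := b, 0 := a))
    = (if f 0 = f i \<and> a = b \<and> (\<forall>j\<in>{1..N} - {i}. f j = h j) then 1 else 0)"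
  using i unfolding omega_kernel_def by auto

lemma sum_tuples_agreeing:
  assumes "finite S" "\<forall>j\<in>S. f j < d"
  shows "(\<Sum>h\<in>tuples d S. if \<forall>j\<in>S. f j = h j then X h else 0) = X (restrict f S)"
proof -
  have "(\<forall>j\<in>S. f j = h j) \<longleftrightarrow> restrict f S = h" if "h \<in> tuples d S" for h
    using that unfolding tuples_def by (auto simp: PiE_def extensional_def restrict_def)
  then have "(\<Sum>h\<in>tuples d S. if \<forall>j\<in>S. f j = h j then X h else 0)
      = (\<Sum>h\<in>tuples d S. if restrict f S = h then X h else 0)"
    by (intro sum.cong) auto
  also have "\<dots> = X (restrict f S)"
  proof -
    have "restrict f S \<in> tuples d S" using assms(2) by (auto simp: tuples_def)
    then show ?thesis using assms(1) by (simp add: sum.delta' finite_tuples)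
  qed
  finally show ?thesis .
qed

lemma restrict_upd_0_i:
  assumes i: "i \<in> {1..N}" and f: "f \<in> tuples d {0..N}"
  shows "(restrict f ({1..N} - {i}))(i := b, 0 := a) = f(i := b, 0 := a)"
proof (rule ext)
  fix x
  show "((restrict f ({1..N} - {i}))(i := b, 0 := a)) x = (f(i := b, 0 := a)) x"
  proof (cases "x \<in> {0..N}")
    case True then show ?thesis by auto
  next
    case False
    then have "f x = undefined" using f unfolding tuples_def by (auto simp: PiE_def extensional_def)
    then show ?thesis using False by auto
  qed
qed

lemma sum_omega_kernel:
  assumes i: "i \<in> {1..N}" and f: "f \<in> tuples d {0..N}"
  shows "(\<Sum>g\<in>tuples d {0..N}. omega_kernel N i f g * V g) = (if f 0 = f i then omega_contract d i V f else 0)"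
proof -
  let ?S = "{1..N} - {i}"
  have "(\<Sum>g\<in>tuples d {0..N}. omega_kernel N i f g * V g)
      = (\<Sum>a<d. \<Sum>b<d. \<Sum>h\<in>tuples d ?S. omega_kernel N i f (h(i := b, 0 := a)) * V (h(i := b, 0 := a)))"
    unfolding sum_tuples_split_0_i[OF i] by simp
  also have "\<dots> = (\<Sum>a<d. \<Sum>b<d. if f 0 = f i \<and> a = b then
        (\<Sum>h\<in>tuples d ?S. if (\<forall>j\<in>?S. f j = h j) then V (h(i := b, 0 := a)) else 0) else 0)"
    unfolding omega_kernel_upd[OF i] by (intro sum.cong refl) (auto intro: sum.cong)
  also have "\<dots> = (\<Sum>a<d. \<Sum>b<d. if f 0 = f i \<and> a = b then V (f(i := b, 0 := a)) else 0)"
  proof (intro sum.cong refl)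
    fix a b
    have "\<forall>j\<in>?S. f j < d" using f by (auto simp: tuples_def)
    from sum_tuples_agreeing[OF _ this, of "\<lambda>h. V (h(i := b, 0 := a))"]
    have "(\<Sum>h\<in>tuples d ?S. if (\<forall>j\<in>?S. f j = h j) then V (h(i := b, 0 := a)) else 0)
        = V (f(i := b, 0 := a))"
      using restrict_upd_0_i[OF i f, of b a] by simp
    then show "(if f 0 = f i \<and> a = b then
        (\<Sum>h\<in>tuples d ?S. if (\<forall>j\<in>?S. f j = h j) then V (h(i := b, 0 := a)) else 0) else 0) =
        (if f 0 = f i \<and> a = b then V (f(i := b, 0 := a)) else 0)" by simp
  qed
  also have "\<dots> = (\<Sum>a<d. if f 0 = f i then V (f(i := a, 0 := a)) else 0)"
    by (intro sum.cong refl) (auto simp: sum.delta')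
  also have "\<dots> = (if f 0 = f i then omega_contract d i V f else 0)"
    by (simp add: omega_contract_def)
  finally show ?thesis .
qed

lemma qform_digit_tuple:
  assumes d: "d > 0"
    and A: "\<And>r c. r < d ^ (N + 1) \<Longrightarrow> c < d ^ (N + 1) \<Longrightarrow>
      A $$ (r, c) = K (digit_tuple d N r) (digit_tuple d N c)"
  shows "qform A (d ^ (N + 1)) (\<lambda>r. V (digit_tuple d N r)) (\<lambda>r. V (digit_tuple d N r))
    = (\<Sum>f\<in>tuples d {0..N}. \<Sum>g\<in>tuples d {0..N}. cnj (V f) * K f g * V g)"
proof -
  have "qform A (d ^ (N + 1)) (\<lambda>r. V (digit_tuple d N r)) (\<lambda>r. V (digit_tuple d N r))
      = (\<Sum>r<d ^ (N + 1). \<Sum>c<d ^ (N + 1).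
          cnj (V (digit_tuple d N r)) * K (digit_tuple d N r) (digit_tuple d N c) * V (digit_tuple d N c))"
    unfolding qform_def by (intro sum.cong refl) (simp add: A)
  also have "\<dots> = (\<Sum>r<d ^ (N + 1). \<Sum>g\<in>tuples d {0..N}.
          cnj (V (digit_tuple d N r)) * K (digit_tuple d N r) g * V g)"
    by (intro sum.cong refl sum_digit_tuple_reindex[OF d])
  also have "\<dots> = (\<Sum>f\<in>tuples d {0..N}. \<Sum>g\<in>tuples d {0..N}. cnj (V f) * K f g * V g)"
    by (rule sum_digit_tuple_reindex[OF d])
  finally show ?thesis .
qed

lemma sum_omega_kernel_form:
  assumes i: "i \<in> {1..N}"
  shows "(\<Sum>f\<in>tuples d {0..N}. \<Sum>g\<in>tuples d {0..N}. cnj (V f) * omega_kernel N i f g * V g)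
    = complex_of_real (omega_form d N i V)"
proof -
  let ?S = "{1..N} - {i}"
  let ?C = "omega_contract d i V"
  have C_upd: "?C (h(i := b, 0 := a)) = ?C h" for h a b
    unfolding omega_contract_def by (intro sum.cong refl arg_cong[where f = V]) (auto simp: fun_eq_iff)
  have i0: "i \<noteq> 0" using i by auto
  have "(\<Sum>f\<in>tuples d {0..N}. \<Sum>g\<in>tuples d {0..N}. cnj (V f) * omega_kernel N i f g * V g)
      = (\<Sum>f\<in>tuples d {0..N}. cnj (V f) * (\<Sum>g\<in>tuples d {0..N}. omega_kernel N i f g * V g))"
    by (simp add: sum_distrib_left mult.assoc)
  also have "\<dots> = (\<Sum>f\<in>tuples d {0..N}. cnj (V f) * (if f 0 = f i then ?C f else 0))"
    by (intro sum.cong refl) (simp add: sum_omega_kernel[OF i])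
  also have "\<dots> = (\<Sum>a<d. \<Sum>b<d. \<Sum>h\<in>tuples d ?S.
      cnj (V (h(i := b, 0 := a))) * (if a = b then ?C h else 0))"
    unfolding sum_tuples_split_0_i[OF i]
    by (intro sum.cong refl) (simp only: C_upd fun_upd_same fun_upd_other[OF i0])
  also have "\<dots> = (\<Sum>a<d. \<Sum>h\<in>tuples d ?S. cnj (V (h(i := a, 0 := a))) * ?C h)"
  proof (rule sum.cong[OF refl])
    fix a assume "a \<in> {..<d}"
    have "(\<Sum>b<d. \<Sum>h\<in>tuples d ?S. cnj (V (h(i := b, 0 := a))) * (if a = b then ?C h else 0))
        = (\<Sum>b<d. if a = b then \<Sum>h\<in>tuples d ?S. cnj (V (h(i := b, 0 := a))) * ?C h else 0)"
      by (intro sum.cong refl) auto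
    then show "(\<Sum>b<d. \<Sum>h\<in>tuples d ?S. cnj (V (h(i := b, 0 := a))) * (if a = b then ?C h else 0))
        = (\<Sum>h\<in>tuples d ?S. cnj (V (h(i := a, 0 := a))) * ?C h)"
      using \<open>a \<in> {..<d}\<close> by (simp add: sum.delta)
  qed
  also have "\<dots> = (\<Sum>h\<in>tuples d ?S. cnj (?C h) * ?C h)"
    unfolding omega_contract_def cnj_sum sum_distrib_right by (rule sum.swap)
  also have "\<dots> = complex_of_real (omega_form d N i V)"
    unfolding omega_form_def of_real_sum
    by (intro sum.cong refl) (simp only: complex_norm_square mult.commute)
  finally show ?thesis .
qed

lemma qform_omega_0i:
  assumes d: "d > 0" and i: "i \<in> {1..N}"
  shows "qform (omega_0i d N i) (d ^ (N + 1)) (\<lambda>r. V (digit_tuple d N r)) (\<lambda>r. V (digit_tuple d N r))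
    = complex_of_real (omega_form d N i V)"
  by (simp only: qform_digit_tuple[OF d omega_0i_digit_tuple[OF i]] sum_omega_kernel_form[OF i])

definition S_form :: "nat \<Rightarrow> nat \<Rightarrow> (nat \<Rightarrow> real) \<Rightarrow> ((nat \<Rightarrow> nat) \<Rightarrow> complex) \<Rightarrow> real" where
  "S_form d N a V = (\<Sum>i\<in>{1..N}. \<bar>a i\<bar> * omega_form d N i V)"

lemma S_mat_carrier: "S_mat d N a \<in> carrier_mat (d ^ (N + 1)) (d ^ (N + 1))"
  unfolding S_mat_def by simp

lemma index_S_mat: "r < d ^ (N + 1) \<Longrightarrow> c < d ^ (N + 1) \<Longrightarrow>
   S_mat d N a $$ (r, c) = (\<Sum>i\<in>{1..N}. complex_of_real \<bar>a i\<bar> * omega_0i d N i $$ (r, c))"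
  unfolding S_mat_def by simp

lemma omega_kernel_commute: "omega_kernel N i f g = omega_kernel N i g f"
  unfolding omega_kernel_def by metis

lemma hermitian_S_mat: "hermitian_on (S_mat d N a) (d ^ (N + 1))"
  unfolding hermitian_on_def
proof (intro allI impI)
  fix r c assume r: "r < d ^ (N + 1)" and c: "c < d ^ (N + 1)"
  have "omega_0i d N i $$ (r, c) = cnj (omega_0i d N i $$ (c, r))" if i: "i \<in> {1..N}" for i
    unfolding omega_0i_digit_tuple[OF i r c] omega_0i_digit_tuple[OF i c r] omega_kernel_commute[of N i "digit_tuple d N c"]
    by (simp add: omega_kernel_def)
  then show "S_mat d N a $$ (r, c) = cnj (S_mat d N a $$ (c, r))"
    unfolding index_S_mat[OF r c] index_S_mat[OF c r] cnj_sum by (intro sum.cong refl) simp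
qed

lemma qform_S_mat:
  "qform (S_mat d N a) (d ^ (N + 1)) v v
    = (\<Sum>i\<in>{1..N}. complex_of_real \<bar>a i\<bar> * qform (omega_0i d N i) (d ^ (N + 1)) v v)"
proof -
  let ?D = "d ^ (N + 1)"
  let ?t = "\<lambda>i r c. complex_of_real \<bar>a i\<bar> * (cnj (v r) * omega_0i d N i $$ (r, c) * v c)"
  have "qform (S_mat d N a) ?D v v = (\<Sum>r<?D. \<Sum>c<?D. \<Sum>i\<in>{1..N}. ?t i r c)"
    unfolding qform_def
    by (intro sum.cong refl) (simp add: index_S_mat sum_distrib_left sum_distrib_right algebra_simps)
  also have "\<dots> = (\<Sum>r<?D. \<Sum>i\<in>{1..N}. \<Sum>c<?D. ?t i r c)"
    by (rule sum.cong[OF refl]) (rule sum.swap)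
  also have "\<dots> = (\<Sum>i\<in>{1..N}. \<Sum>r<?D. \<Sum>c<?D. ?t i r c)"
    by (rule sum.swap)
  also have "\<dots> = (\<Sum>i\<in>{1..N}. complex_of_real \<bar>a i\<bar> * qform (omega_0i d N i) ?D v v)"
    unfolding qform_def sum_distrib_left by simp
  finally show ?thesis .
qed

lemma rayleigh_S_mat:
  assumes d: "d > 0"
  shows "rayleigh (S_mat d N a) (d ^ (N + 1)) (\<lambda>r. V (digit_tuple d N r)) = S_form d N a V"
proof -
  have "(\<Sum>i\<in>{1..N}. complex_of_real \<bar>a i\<bar>
        * qform (omega_0i d N i) (d ^ (N + 1)) (\<lambda>r. V (digit_tuple d N r)) (\<lambda>r. V (digit_tuple d N r)))
      = complex_of_real (S_form d N a V)"
    unfolding S_form_def of_real_sum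
  proof (rule sum.cong[OF refl])
    fix i assume "i \<in> {1..N}"
    then show "complex_of_real \<bar>a i\<bar>
        * qform (omega_0i d N i) (d ^ (N + 1)) (\<lambda>r. V (digit_tuple d N r)) (\<lambda>r. V (digit_tuple d N r))
      = complex_of_real (\<bar>a i\<bar> * omega_form d N i V)"
      by (simp only: qform_omega_0i[OF d] of_real_mult)
  qed
  then show ?thesis unfolding rayleigh_def qform_S_mat by simp
qed

lemma sqnorm_digit_tuple:
  assumes d: "d > 0"
  shows "sqnorm (d ^ (N + 1)) (\<lambda>r. V (digit_tuple d N r)) = tuple_sqnorm d N V"
  unfolding sqnorm_def tuple_sqnorm_def by (rule sum_digit_tuple_reindex[OF d, of "\<lambda>f. (cmod (V f))\<^sup>2"])

lemma S_form_le_lambda_max: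
  assumes "d > 0"
  shows "S_form d N a V \<le> lambda_max (S_mat d N a) * tuple_sqnorm d N V"
proof -
  have "d ^ (N + 1) > 0" using assms by simp
  then obtain u where "\<And>x. rayleigh (S_mat d N a) (d ^ (N + 1)) x
      \<le> lambda_max (S_mat d N a) * sqnorm (d ^ (N + 1)) x"
    using hermitian_lambda_max[OF S_mat_carrier _ hermitian_S_mat, of d N a] by blast
  from this[of "\<lambda>r. V (digit_tuple d N r)"] show ?thesis
    by (simp only: rayleigh_S_mat[OF assms] sqnorm_digit_tuple[OF assms])
qed

lemma lambda_max_S_mat_attained:
  assumes d: "d > 0"
  obtains V where "tuple_sqnorm d N V = 1" "S_form d N a V = lambda_max (S_mat d N a)"
proof -
  let ?D = "d ^ (N + 1)"
  have "?D > 0" using d by simp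
  then obtain u where u1: "sqnorm ?D u = 1"
    and uM: "rayleigh (S_mat d N a) ?D u = lambda_max (S_mat d N a)"
    using hermitian_lambda_max[OF S_mat_carrier _ hermitian_S_mat, of d N a] by blast
  define V where "V = (\<lambda>f. u (inv_into {..<?D} (digit_tuple d N) f))"
  have "V (digit_tuple d N r) = u r" if "r < ?D" for r
    unfolding V_def using bij_betw_inv_into_left[OF bij_betw_digit_tuple[OF d]] that by simp
  then have "sqnorm ?D (\<lambda>r. V (digit_tuple d N r)) = sqnorm ?D u"
    "rayleigh (S_mat d N a) ?D (\<lambda>r. V (digit_tuple d N r)) = rayleigh (S_mat d N a) ?D u"
    unfolding sqnorm_def rayleigh_def qform_def by (auto intro!: arg_cong[where f = Re] sum.cong)
  with u1 uM show thesis
    by (intro that[of V]) (simp_all only: rayleigh_S_mat[OF d] sqnorm_digit_tuple[OF d])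
qed

lemma omega_form_nonneg: "omega_form d N i V \<ge> 0"
  unfolding omega_form_def by (intro sum_nonneg) auto

lemma S_form_remove:
  assumes "i \<in> {1..N}"
  shows "S_form d N a V
    = \<bar>a i\<bar> * omega_form d N i V + (\<Sum>j\<in>{1..N} - {i}. \<bar>a j\<bar> * omega_form d N j V)"
  unfolding S_form_def using assms by (simp add: sum.remove)

lemma S_form_upd:
  assumes "i \<in> {1..N}"
  shows "S_form d N (a(i := t)) V
    = \<bar>t\<bar> * omega_form d N i V + (\<Sum>j\<in>{1..N} - {i}. \<bar>a j\<bar> * omega_form d N j V)"
proof -
  have "(\<Sum>j\<in>{1..N} - {i}. \<bar>(a(i := t)) j\<bar> * omega_form d N j V)
      = (\<Sum>j\<in>{1..N} - {i}. \<bar>a j\<bar> * omega_form d N j V)"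
    by (intro sum.cong) auto
  then show ?thesis using S_form_remove[OF assms, of d "a(i := t)" V] by simp
qed

section \<open>Twirling one tensor factor\<close>

definition twirl :: "nat \<Rightarrow> nat \<Rightarrow> nat \<Rightarrow> ((nat \<Rightarrow> nat) \<Rightarrow> complex) \<Rightarrow> (nat \<Rightarrow> nat) \<Rightarrow> complex" where
  "twirl i w c U = (\<lambda>f. if f i = w then U (f(i := c)) else 0)"

lemma sum_twirl_indicator:
  fixes G :: "(nat \<Rightarrow> nat) \<Rightarrow> 'a::comm_semiring_1"
  assumes i: "i \<in> R"
  shows "(\<Sum>w<d. \<Sum>c<d. \<Sum>f\<in>tuples d R. if f i = w then G (f(i := c)) else 0)
    = of_nat d * (\<Sum>f\<in>tuples d R. G f)"
proof -
  have R: "R = insert i (R - {i})" and i_notin: "i \<notin> R - {i}" using i by auto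
  have "(\<Sum>w<d. \<Sum>c<d. \<Sum>f\<in>tuples d R. if f i = w then G (f(i := c)) else 0)
      = (\<Sum>c<d. \<Sum>w<d. \<Sum>f\<in>tuples d R. if f i = w then G (f(i := c)) else 0)"
    by (rule sum.swap)
  also have "\<dots> = (\<Sum>c<d. \<Sum>f\<in>tuples d R. \<Sum>w<d. if f i = w then G (f(i := c)) else 0)"
    by (rule sum.cong[OF refl]) (rule sum.swap)
  also have "\<dots> = (\<Sum>c<d. \<Sum>f\<in>tuples d R. G (f(i := c)))"
    using i by (intro sum.cong refl) (auto simp: tuples_def sum.delta)
  also have "\<dots> = (\<Sum>c<d. \<Sum>b<d. \<Sum>h\<in>tuples d (R - {i}). G (h(i := c)))"
    by (subst R, subst sum_tuples_insert[OF i_notin]) simp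
  also have "\<dots> = of_nat d * (\<Sum>c<d. \<Sum>h\<in>tuples d (R - {i}). G (h(i := c)))"
    by (simp add: sum_distrib_left)
  also have "(\<Sum>c<d. \<Sum>h\<in>tuples d (R - {i}). G (h(i := c))) = (\<Sum>f\<in>tuples d R. G f)"
    by (subst (2) R, subst sum_tuples_insert[OF i_notin]) simp
  finally show ?thesis .
qed

lemma sum_twirl_tuple_sqnorm:
  assumes "i \<in> {1..N}"
  shows "(\<Sum>w<d. \<Sum>c<d. tuple_sqnorm d N (twirl i w c U)) = real d * tuple_sqnorm d N U"
proof -
  have "tuple_sqnorm d N (twirl i w c U)
      = (\<Sum>f\<in>tuples d {0..N}. if f i = w then (cmod (U (f(i := c))))\<^sup>2 else 0)" for w c
    unfolding tuple_sqnorm_def twirl_def by (intro sum.cong) auto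
  moreover have "i \<in> {0..N}" using assms by simp
  note sum_twirl_indicator[OF this, where d = d and G = "\<lambda>f. (cmod (U f))\<^sup>2"]
  ultimately show ?thesis unfolding tuple_sqnorm_def by simp
qed

text \<open>Twirling in factor \<open>i\<close> turns the \<open>(0,i)\<close> correlation of \<open>U\<close> into the full
  weight of \<open>U\<close>: the contraction with \<open>\<Omega>\<close> picks \<open>f 0 = f i = w\<close>, and \<open>(w, c)\<close> then
  ranges over all values of factors \<open>0\<close> and \<open>i\<close>.\<close>
lemma sum_twirl_omega_form_same:
  assumes i: "i \<in> {1..N}"
  shows "(\<Sum>w<d. \<Sum>c<d. omega_form d N i (twirl i w c U)) = tuple_sqnorm d N U"
proof -
  have i0: "i \<noteq> 0" using i by auto
  have "(\<Sum>a<d. twirl i w c U (h(i := a, 0 := a))) = U (h(i := c, 0 := w))" if "w < d" for w c h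
  proof -
    have "twirl i w c U (h(i := a, 0 := a)) = (if w = a then U (h(i := c, 0 := w)) else 0)" for a
      using i0 by (auto simp: twirl_def fun_upd_twist)
    then show ?thesis using that by (simp add: sum.delta)
  qed
  then have "omega_form d N i (twirl i w c U)
      = (\<Sum>h\<in>tuples d ({1..N} - {i}). (cmod (U (h(i := c, 0 := w))))\<^sup>2)" if "w < d" for w c
    using that unfolding omega_form_def omega_contract_def by simp
  then show ?thesis
    unfolding tuple_sqnorm_def sum_tuples_split_0_i[OF i] by simp
qed

lemma sum_twirl_omega_form_other:
  assumes i: "i \<in> {1..N}" and j: "j \<in> {1..N}" and ij: "i \<noteq> j"
  shows "(\<Sum>w<d. \<Sum>c<d. omega_form d N j (twirl i w c U)) = real d * omega_form d N j U"
proof -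
  define G where "G = (\<lambda>h. (cmod (\<Sum>a<d. U (h(j := a, 0 := a))))\<^sup>2)"
  have "twirl i w c U (h(j := a, 0 := a)) = (if h i = w then U ((h(i := c))(j := a, 0 := a)) else 0)"
    for w c h a
    using i ij by (auto simp: twirl_def intro!: arg_cong[where f = U])
  then have "(cmod (\<Sum>a<d. twirl i w c U (h(j := a, 0 := a))))\<^sup>2 = (if h i = w then G (h(i := c)) else 0)"
    for w c h
    by (cases "h i = w") (simp_all add: G_def)
  moreover have "i \<in> {1..N} - {j}" using i ij by simp
  note sum_twirl_indicator[OF this, where d = d and G = G]
  ultimately show ?thesis unfolding omega_form_def omega_contract_def G_def by simp
qed

lemma sum_twirl_S_form:
  assumes i: "i \<in> {1..N}"
  shows "(\<Sum>w<d. \<Sum>c<d. S_form d N a (twirl i w c U))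
    = \<bar>a i\<bar> * tuple_sqnorm d N U + real d * S_form d N (a(i := 0)) U"
proof -
  have "(\<Sum>w<d. \<Sum>c<d. S_form d N a (twirl i w c U))
      = (\<Sum>j\<in>{1..N}. \<bar>a j\<bar> * (\<Sum>w<d. \<Sum>c<d. omega_form d N j (twirl i w c U)))"
    unfolding S_form_def sum_distrib_left
    by (subst sum.swap, rule sum.cong[OF refl], subst sum.swap, rule refl)
  also have "\<dots> = (\<Sum>j\<in>{1..N}. \<bar>a j\<bar> * (if j = i then tuple_sqnorm d N U else real d * omega_form d N j U))"
    using sum_twirl_omega_form_same[OF i] sum_twirl_omega_form_other[OF i]
    by (intro sum.cong) auto
  also have "\<dots> = \<bar>a i\<bar> * tuple_sqnorm d N U + real d * (\<Sum>j\<in>{1..N} - {i}. \<bar>a j\<bar> * omega_form d N j U)"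
  proof -
    have "(\<Sum>j\<in>{1..N} - {i}. \<bar>a j\<bar> * (if j = i then tuple_sqnorm d N U else real d * omega_form d N j U))
        = real d * (\<Sum>j\<in>{1..N} - {i}. \<bar>a j\<bar> * omega_form d N j U)"
      unfolding sum_distrib_left by (intro sum.cong) auto
    then show ?thesis using i by (simp add: sum.remove)
  qed
  also have "(\<Sum>j\<in>{1..N} - {i}. \<bar>a j\<bar> * omega_form d N j U) = S_form d N (a(i := 0)) U"
    using S_form_upd[OF i, of d a 0 U] by simp
  finally show ?thesis .
qed

text \<open>Averaging the Rayleigh bound for \<open>a(i := t)\<close> over the \<open>d\<^sup>2\<close> twirls of a top
  eigenvector of \<open>S (a(i := 0))\<close>.\<close>
lemma lambda_max_S_coord_gain:
  assumes d: "d > 0" and i: "i \<in> {1..N}" and t: "t \<ge> 0"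
  shows "real d * lambda_max (S_mat d N (a(i := 0))) + t \<le> real d * lambda_max (S_mat d N (a(i := t)))"
proof -
  obtain U where U1: "tuple_sqnorm d N U = 1"
    and U_max: "S_form d N (a(i := 0)) U = lambda_max (S_mat d N (a(i := 0)))"
    using lambda_max_S_mat_attained[OF d] by blast
  have "t + real d * lambda_max (S_mat d N (a(i := 0)))
      = (\<Sum>w<d. \<Sum>c<d. S_form d N (a(i := t)) (twirl i w c U))"
    using sum_twirl_S_form[OF i, of d "a(i := t)" U] t U1 U_max by simp
  also have "\<dots> \<le> (\<Sum>w<d. \<Sum>c<d. lambda_max (S_mat d N (a(i := t))) * tuple_sqnorm d N (twirl i w c U))"
    by (intro sum_mono S_form_le_lambda_max[OF d])
  also have "\<dots> = real d * lambda_max (S_mat d N (a(i := t)))"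
    using sum_twirl_tuple_sqnorm[OF i, of d U] U1 by (simp add: sum_distrib_left[symmetric])
  finally show ?thesis by simp
qed

lemma lambda_max_S_coord_convex:
  assumes d: "d > 0" and i: "i \<in> {1..N}" and s: "0 \<le> s" "s \<le> t"
  shows "t * lambda_max (S_mat d N (a(i := s)))
    \<le> (t - s) * lambda_max (S_mat d N (a(i := 0))) + s * lambda_max (S_mat d N (a(i := t)))"
proof -
  obtain V where V1: "tuple_sqnorm d N V = 1"
    and V_max: "S_form d N (a(i := s)) V = lambda_max (S_mat d N (a(i := s)))"
    using lambda_max_S_mat_attained[OF d] by blast
  define P0 where "P0 = S_form d N (a(i := 0)) V"
  define q where "q = omega_form d N i V"
  have "P0 \<le> lambda_max (S_mat d N (a(i := 0)))" "P0 + t * q \<le> lambda_max (S_mat d N (a(i := t)))"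
    using S_form_le_lambda_max[OF d, of N "a(i := 0)" V] S_form_le_lambda_max[OF d, of N "a(i := t)" V]
      S_form_upd[OF i, of d a t V] S_form_upd[OF i, of d a 0 V] s V1 by (simp_all add: P0_def q_def)
  then have "(t - s) * P0 + s * (P0 + t * q)
      \<le> (t - s) * lambda_max (S_mat d N (a(i := 0))) + s * lambda_max (S_mat d N (a(i := t)))"
    using s by (intro add_mono mult_left_mono) simp_all
  moreover have "t * lambda_max (S_mat d N (a(i := s))) = (t - s) * P0 + s * (P0 + t * q)"
    using S_form_upd[OF i, of d a s V] S_form_upd[OF i, of d a 0 V] s V_max
    by (simp add: P0_def q_def algebra_simps)
  ultimately show ?thesis by simp
qed

lemma lambda_max_S_coord_increment:
  assumes d: "d > 0" and i: "i \<in> {1..N}" and s: "0 \<le> s" "s \<le> t"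
  shows "t - s \<le> real d * (lambda_max (S_mat d N (a(i := t))) - lambda_max (S_mat d N (a(i := s))))"
proof (cases "t = 0")
  case True
  then show ?thesis using s by simp
next
  case False
  then have "t > 0" using s by simp
  define L0 where "L0 = lambda_max (S_mat d N (a(i := 0)))"
  define Ls where "Ls = lambda_max (S_mat d N (a(i := s)))"
  define Lt where "Lt = lambda_max (S_mat d N (a(i := t)))"
  have "t * (real d * Ls) \<le> (t - s) * (real d * L0) + s * (real d * Lt)"
    using mult_left_mono[OF lambda_max_S_coord_convex[OF d i s, of a], of "real d"]
    by (simp add: L0_def Ls_def Lt_def algebra_simps)
  also have "\<dots> \<le> (t - s) * (real d * Lt - t) + s * (real d * Lt)"
    using lambda_max_S_coord_gain[OF d i, of t a] s \<open>t > 0\<close>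
    by (intro add_mono mult_left_mono) (simp_all add: L0_def Lt_def)
  finally have "t * (t - s) \<le> t * (real d * (Lt - Ls))" by (simp add: algebra_simps)
  then show ?thesis using \<open>t > 0\<close> by (simp add: Lt_def Ls_def)
qed

definition omega_test :: "nat \<Rightarrow> nat \<Rightarrow> (nat \<Rightarrow> nat) \<Rightarrow> complex" where
  "omega_test N i = (\<lambda>f. if (\<forall>l\<in>{1..N} - {i}. f l = 0) \<and> f 0 = f i then 1 else 0)"

lemma sum_tuples_indicator_zero:
  assumes "finite S" "d > 0"
  shows "(\<Sum>h\<in>tuples d S. if \<forall>l\<in>S. h l = 0 then X else 0) = X"
proof -
  have "(\<forall>l\<in>S. h l = 0) \<longleftrightarrow> (\<forall>l\<in>S. 0 = h l)" for h :: "nat \<Rightarrow> nat" by auto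
  then show ?thesis using sum_tuples_agreeing[OF assms(1), of "\<lambda>_. 0" d "\<lambda>_. X"] assms(2) by simp
qed

lemma omega_form_omega_test:
  assumes d: "d > 0" and i: "i \<in> {1..N}"
  shows "omega_form d N i (omega_test N i) = (real d)\<^sup>2"
proof -
  let ?S = "{1..N} - {i}"
  have "omega_test N i (h(i := a, 0 := a)) = (if \<forall>l\<in>?S. h l = 0 then 1 else 0)" for h a
    using i by (auto simp: omega_test_def)
  then have "omega_form d N i (omega_test N i) = (\<Sum>h\<in>tuples d ?S. if \<forall>l\<in>?S. h l = 0 then (real d)\<^sup>2 else 0)"
    unfolding omega_form_def omega_contract_def by (intro sum.cong) auto
  also have "\<dots> = (real d)\<^sup>2" using d by (simp add: sum_tuples_indicator_zero)
  finally show ?thesis .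
qed

lemma tuple_sqnorm_omega_test:
  assumes d: "d > 0" and i: "i \<in> {1..N}"
  shows "tuple_sqnorm d N (omega_test N i) = real d"
proof -
  let ?S = "{1..N} - {i}"
  have "(cmod (omega_test N i (h(i := b, 0 := a))))\<^sup>2 = (if a = b then (if \<forall>l\<in>?S. h l = 0 then 1 else 0) else 0)"
    for h a b
    using i by (auto simp: omega_test_def)
  then have "tuple_sqnorm d N (omega_test N i)
      = (\<Sum>a<d. \<Sum>b<d. if a = b then (\<Sum>h\<in>tuples d ?S. if \<forall>l\<in>?S. h l = 0 then 1 else 0) else 0)"
    unfolding tuple_sqnorm_def sum_tuples_split_0_i[OF i] by (intro sum.cong) auto
  also have "\<dots> = real d"
    by (simp only: sum_tuples_indicator_zero[OF finite_Diff[OF finite_atLeastAtMost] d]) simp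
  finally show ?thesis .
qed

lemma lambda_max_S_ge_coord:
  assumes d: "d > 0" and i: "i \<in> {1..N}"
  shows "real d * \<bar>a i\<bar> \<le> lambda_max (S_mat d N a)"
proof -
  have "real d * (real d * \<bar>a i\<bar>) = \<bar>a i\<bar> * omega_form d N i (omega_test N i)"
    using omega_form_omega_test[OF d i] by (simp add: power2_eq_square)
  also have "\<dots> \<le> S_form d N a (omega_test N i)"
    using S_form_remove[OF i, of d a "omega_test N i"]
    by (simp add: sum_nonneg omega_form_nonneg)
  also have "\<dots> \<le> real d * lambda_max (S_mat d N a)"
    using S_form_le_lambda_max[OF d, of N a "omega_test N i"] tuple_sqnorm_omega_test[OF d i]
    by (simp add: mult.commute)
  finally show ?thesis using d by simp
qed

lemma lambda_max_S_zero:
  assumes d: "d > 0" and "\<forall>i\<in>{1..N}. a i = 0"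
  shows "lambda_max (S_mat d N a) = 0"
proof -
  obtain V where "S_form d N a V = lambda_max (S_mat d N a)"
    using lambda_max_S_mat_attained[OF d] by blast
  then show ?thesis using assms(2) by (simp add: S_form_def)
qed

lemma lambda_max_S_scale:
  assumes d: "d > 0"
  shows "lambda_max (S_mat d N (\<lambda>i. k * x i)) = \<bar>k\<bar> * lambda_max (S_mat d N x)"
proof -
  have S_form_scale: "S_form d N (\<lambda>i. k * x i) V = \<bar>k\<bar> * S_form d N x V" for V
    unfolding S_form_def sum_distrib_left by (intro sum.cong refl) (simp add: abs_mult)
  show ?thesis
  proof (rule antisym)
    obtain V where "tuple_sqnorm d N V = 1"
      and "S_form d N (\<lambda>i. k * x i) V = lambda_max (S_mat d N (\<lambda>i. k * x i))"
      using lambda_max_S_mat_attained[OF d] by blast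
    moreover have "S_form d N x V \<le> lambda_max (S_mat d N x) * tuple_sqnorm d N V"
      by (rule S_form_le_lambda_max[OF d])
    ultimately show "lambda_max (S_mat d N (\<lambda>i. k * x i)) \<le> \<bar>k\<bar> * lambda_max (S_mat d N x)"
      by (simp add: S_form_scale) (metis abs_ge_zero mult_left_mono)
  next
    obtain V where "tuple_sqnorm d N V = 1" and "S_form d N x V = lambda_max (S_mat d N x)"
      using lambda_max_S_mat_attained[OF d] by blast
    moreover have "S_form d N (\<lambda>i. k * x i) V \<le> lambda_max (S_mat d N (\<lambda>i. k * x i)) * tuple_sqnorm d N V"
      by (rule S_form_le_lambda_max[OF d])
    ultimately show "\<bar>k\<bar> * lambda_max (S_mat d N x) \<le> lambda_max (S_mat d N (\<lambda>i. k * x i))"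
      by (simp add: S_form_scale)
  qed
qed

lemma lambda_max_S_add_le:
  assumes d: "d > 0"
  shows "lambda_max (S_mat d N (\<lambda>i. \<bar>x i\<bar> + \<bar>y i\<bar>)) \<le> lambda_max (S_mat d N x) + lambda_max (S_mat d N y)"
proof -
  obtain V where V1: "tuple_sqnorm d N V = 1"
    and V_max: "S_form d N (\<lambda>i. \<bar>x i\<bar> + \<bar>y i\<bar>) V = lambda_max (S_mat d N (\<lambda>i. \<bar>x i\<bar> + \<bar>y i\<bar>))"
    using lambda_max_S_mat_attained[OF d] by blast
  have "S_form d N (\<lambda>i. \<bar>x i\<bar> + \<bar>y i\<bar>) V = S_form d N x V + S_form d N y V"
    unfolding S_form_def sum.distrib[symmetric] by (intro sum.cong refl) (simp add: algebra_simps)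
  then show ?thesis
    using V1 V_max S_form_le_lambda_max[OF d, of N x V] S_form_le_lambda_max[OF d, of N y V] by simp
qed

definition Q_numerator :: "nat \<Rightarrow> nat \<Rightarrow> (nat \<Rightarrow> real) \<Rightarrow> real" where
  "Q_numerator d N x = real d * lambda_max (S_mat d N x) - norm1 N x"

lemma Q_norm_eq_Q_numerator: "Q_norm d N x = Q_numerator d N x / (real d ^ 2 - 1)"
  unfolding Q_norm_def Q_numerator_def ..

lemma Q_numerator_abs_cong:
  assumes "\<forall>i\<in>{1..N}. \<bar>x i\<bar> = \<bar>y i\<bar>"
  shows "Q_numerator d N x = Q_numerator d N y"
proof -
  have "S_mat d N x = S_mat d N y"
    unfolding S_mat_def using assms by (intro cong_mat) (auto intro!: sum.cong)
  moreover have "norm1 N x = norm1 N y"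
    unfolding norm1_def using assms by (intro sum.cong) auto
  ultimately show ?thesis by (simp add: Q_numerator_def)
qed

lemma norm1_upd:
  assumes "i \<in> {1..N}"
  shows "norm1 N (x(i := r)) = \<bar>r\<bar> + (\<Sum>j\<in>{1..N} - {i}. \<bar>x j\<bar>)"
proof -
  have "(\<Sum>j\<in>{1..N} - {i}. \<bar>(x(i := r)) j\<bar>) = (\<Sum>j\<in>{1..N} - {i}. \<bar>x j\<bar>)"
    by (intro sum.cong) auto
  then show ?thesis unfolding norm1_def using assms by (simp add: sum.remove)
qed

lemma Q_numerator_coord_mono:
  assumes d: "d > 0" and i: "i \<in> {1..N}" and s: "0 \<le> s" "s \<le> t"
  shows "Q_numerator d N (x(i := s)) \<le> Q_numerator d N (x(i := t))"
  using lambda_max_S_coord_increment[OF d i s, of x] s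
  by (simp add: Q_numerator_def norm1_upd[OF i] algebra_simps)

text \<open>Raise the coordinates of \<open>x\<close> to those of \<open>y\<close> one at a time.\<close>
lemma Q_numerator_mono:
  assumes d: "d > 0" and le: "\<forall>i\<in>{1..N}. \<bar>x i\<bar> \<le> \<bar>y i\<bar>"
  shows "Q_numerator d N x \<le> Q_numerator d N y"
proof -
  define m where "m = (\<lambda>J i. if i \<in> J then \<bar>y i\<bar> else \<bar>x i\<bar>)"
  have "Q_numerator d N x \<le> Q_numerator d N (m J)" if "finite J" "J \<subseteq> {1..N}" for J
    using that
  proof (induction J rule: finite_induct)
    case empty
    show ?case by (rule eq_refl, rule Q_numerator_abs_cong) (simp add: m_def)
  next
    case (insert i J)
    then have i: "i \<in> {1..N}" by simp
    have "Q_numerator d N x \<le> Q_numerator d N (m J)" using insert by simp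
    also have "m J = (m J)(i := \<bar>x i\<bar>)" using insert.hyps(2) by (auto simp: m_def)
    also have "Q_numerator d N \<dots> \<le> Q_numerator d N ((m J)(i := \<bar>y i\<bar>))"
      using le i by (intro Q_numerator_coord_mono[OF d i]) auto
    also have "(m J)(i := \<bar>y i\<bar>) = m (insert i J)" by (auto simp: m_def)
    finally show ?case .
  qed
  also have "Q_numerator d N (m {1..N}) = Q_numerator d N y"
    by (rule Q_numerator_abs_cong) (simp add: m_def)
  finally show ?thesis by simp
qed

lemma Q_numerator_zero:
  assumes "d > 0" "\<forall>i\<in>{1..N}. x i = 0"
  shows "Q_numerator d N x = 0"
  using assms by (simp add: Q_numerator_def lambda_max_S_zero norm1_def)

lemma Q_numerator_ge_coord:
  assumes d: "d > 0" and i: "i \<in> {1..N}"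
  shows "(real d ^ 2 - 1) * \<bar>x i\<bar> \<le> Q_numerator d N x"
proof -
  define e where "e = (\<lambda>_. 0::real)(i := x i)"
  have "norm1 N e = \<bar>x i\<bar>"
    unfolding e_def norm1_upd[OF i] by simp
  then have "(real d ^ 2 - 1) * \<bar>x i\<bar> \<le> Q_numerator d N e"
    using mult_left_mono[OF lambda_max_S_ge_coord[OF d i, of e] of_nat_0_le_iff]
    by (simp add: Q_numerator_def e_def power2_eq_square algebra_simps)
  also have "\<dots> \<le> Q_numerator d N x"
    by (rule Q_numerator_mono[OF d]) (simp add: e_def)
  finally show ?thesis .
qed

lemma Q_norm_denominator_pos: "d \<ge> 2 \<Longrightarrow> real d ^ 2 - 1 > 0"
  by (simp add: less_1_mult power2_eq_square)

lemma Q_norm_cong: "\<forall>i\<in>{1..N}. x i = y i \<Longrightarrow> Q_norm d N x = Q_norm d N y"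
  unfolding Q_norm_eq_Q_numerator by (simp add: Q_numerator_abs_cong)

lemma Q_norm_nonneg:
  assumes "d \<ge> 2"
  shows "Q_norm d N x \<ge> 0"
proof -
  have "0 = Q_numerator d N (\<lambda>_. 0)" using assms by (simp add: Q_numerator_zero)
  also have "\<dots> \<le> Q_numerator d N x" using assms by (intro Q_numerator_mono) auto
  moreover have "real d ^ 2 - 1 > 0" using Q_norm_denominator_pos[OF assms] .
  ultimately show ?thesis by (simp add: Q_norm_eq_Q_numerator)
qed

lemma Q_norm_eq_0_iff:
  assumes "d \<ge> 2"
  shows "Q_norm d N x = 0 \<longleftrightarrow> (\<forall>i\<in>{1..N}. x i = 0)"
proof
  have pos: "real d ^ 2 - 1 > 0" using Q_norm_denominator_pos[OF assms] .
  show "\<forall>i\<in>{1..N}. x i = 0" if "Q_norm d N x = 0"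
  proof
    fix i assume "i \<in> {1..N}"
    then have "(real d ^ 2 - 1) * \<bar>x i\<bar> \<le> 0"
      using Q_numerator_ge_coord[of d i N x] that assms pos by (simp add: Q_norm_eq_Q_numerator)
    then show "x i = 0" using pos by (simp add: mult_le_0_iff)
  qed
qed (use assms in \<open>simp add: Q_norm_eq_Q_numerator Q_numerator_zero\<close>)

lemma Q_norm_scale:
  assumes "d > 0"
  shows "Q_norm d N (\<lambda>i. c * x i) = \<bar>c\<bar> * Q_norm d N x"
  unfolding Q_norm_def norm1_def lambda_max_S_scale[OF assms]
  by (simp add: abs_mult sum_distrib_left algebra_simps)

lemma Q_norm_triangle:
  assumes "d \<ge> 2"
  shows "Q_norm d N (\<lambda>i. x i + y i) \<le> Q_norm d N x + Q_norm d N y"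
proof -
  have d: "d > 0" using assms by simp
  have "Q_numerator d N (\<lambda>i. x i + y i) \<le> Q_numerator d N (\<lambda>i. \<bar>x i\<bar> + \<bar>y i\<bar>)"
    by (rule Q_numerator_mono[OF d]) (auto simp: abs_triangle_ineq)
  also have "\<dots> \<le> Q_numerator d N x + Q_numerator d N y"
    using mult_left_mono[OF lambda_max_S_add_le[OF d, of N x y] of_nat_0_le_iff]
    by (simp add: Q_numerator_def norm1_def sum.distrib algebra_simps)
  moreover have "real d ^ 2 - 1 > 0" using Q_norm_denominator_pos[OF assms] .
  ultimately show ?thesis
    by (simp add: Q_norm_eq_Q_numerator add_divide_distrib[symmetric] divide_right_mono)
qed

theorem mainTheorem2:
  fixes d N :: nat
  assumes "d \<ge> 2" and "N \<ge> 1"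
  shows "is_norm_on N (Q_norm d N)"
  unfolding is_norm_on_def
  using Q_norm_cong Q_norm_nonneg[OF assms(1)] Q_norm_eq_0_iff[OF assms(1)]
    Q_norm_scale[of d N] Q_norm_triangle[OF assms(1)] assms(1)
  by simp

end
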